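(* Let $F:\mathbb{R}^p\to\mathbb{R}^p$ be single-valued with $\mathrm{zer}\,F\neq\emptyset$, $L$-Lipschitz continuous, and suppose there exist $x^\star\in\mathrm{zer}\,F$ and $\rho\ge0$ such that $\langle Fx,x-x^\star\rangle\ge-\rho\|Fx\|^2$ for all $x\in\mathrm{dom}\,F$. Let $\kappa_1,\kappa_2\ge0$, $\beta\in(0,1]$, $\eta>0$, and let $\{(x^k,y^k)\}$ be generated by: start from $x^0\in\mathrm{dom}\,F$, set $x^{-1}=y^{-1}:=x^0$, and for $k\ge0$ $$y^k:=x^k-\tfrac{\eta}{\beta}u^k,\qquad x^{k+1}:=x^k-\eta Fy^k,$$ where $u^k\in\mathbb{R}^p$ satisfies $\|Fx^k-u^k\|^2\le\kappa_1\|Fx^k-Fy^{k-1}\|^2+\kappa_2\|Fx^k-Fx^{k-1}\|^2$. For $\gamma>0$ and $r>0$ define $$\mathcal{P}_k:=\|x^k-x^\star\|^2+\tfrac{\kappa_1(1+r)L^2\eta^2}{r\gamma}\|x^k-y^{k-1}\|^2+\tfrac{\kappa_2(1+r)L^2\eta^2}{r\gamma}\|x^k-x^{k-1}\|^2.$$ Then for any $s>0$, $\mu\in[0,1]$ and $k\ge0$, $$\begin{aligned}\mathcal{P}_{k+1}\le{}&\mathcal{P}_k-\Big(\beta-\tfrac{(1+r)L^2\eta^2}{\gamma}-\tfrac{2\mu\rho(1+s)}{s\eta}\Big)\|y^k-x^k\|^2\\&-\Big(\beta-\gamma-\tfrac{\kappa_1(1+r)L^2\eta^2}{r\gamma}-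\tfrac{2\mu\rho(1+s)}{\eta}\Big)\|x^{k+1}-y^k\|^2\\&-\Big(1-\beta-\tfrac{\kappa_2(1+r)L^2\eta^2}{r\gamma}-\tfrac{2(1-\mu)\rho}{\eta}\Big)\|x^{k+1}-x^k\|^2.\end{aligned}$$
   Context: $\mathrm{zer}\,F:=\{x:Fx=0\}$. $F$ is $L$-Lipschitz if $\|Fx-Fy\|\le L\|x-y\|$ for all $x,y\in\mathrm{dom}\,F$. *)

theory Defs
  imports "HOL-Analysis.Analysis"
begin

definition zer :: "('a \<Rightarrow> 'b::zero) \<Rightarrow> 'a set" where
  "zer F = {x. F x = 0}"

text \<open>Potential function P_k (iterates indexed by int, k >= 0, with x(-1), y(-1) given).\<close>
definition Pot :: "real \<Rightarrow> real \<Rightarrow> real \<Rightarrow> real \<Rightarrow> real \<Rightarrow> real \<Rightarrow> 'a::real_normed_vector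
    \<Rightarrow> (int \<Rightarrow> 'a) \<Rightarrow> (int \<Rightarrow> 'a) \<Rightarrow> int \<Rightarrow> real" where
  "Pot \<kappa>1 \<kappa>2 L \<eta> r \<gamma> xs x y k =
     norm (x k - xs)^2
     + \<kappa>1 * (1 + r) * L^2 * \<eta>^2 / (r * \<gamma>) * norm (x k - y (k - 1))^2
     + \<kappa>2 * (1 + r) * L^2 * \<eta>^2 / (r * \<gamma>) * norm (x k - x (k - 1))^2"

end

theory Submission
  imports Defs
begin

text \<open>
  Write a = x k, b = y k and c = x (k + 1), so that c = a - \<eta> F b and \<beta> (a - b) = \<eta> u k.
  Expanding norm (c - xs)^2 gives an exact identity whose only indefinite terms are
  -2 \<eta> <F b, b - xs>, bounded via the weak Minty condition by (2 \<rho> / \<eta>) norm (c - a)^2, and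
  2 \<eta> <u k - F b, c - b>, bounded by Young's inequality with weight \<gamma>.
  Splitting u k - F b at F a with weight r, Lipschitz continuity turns norm (F a - F b)^2 into
  L^2 norm (a - b)^2, while the hypothesis on u k bounds norm (F a - u k)^2 by exactly the two
  terms carried in the potential.  Finally a \<mu>-fraction of the Minty term is redistributed onto
  norm (c - b)^2 and norm (b - a)^2 with weight s.
\<close>

lemma inner_le_Young:
  fixes p q :: "'a::real_inner"
  assumes "t > 0"
  shows "2 * inner p q \<le> t * norm p^2 + norm q^2 / t"
proof -
  have "0 \<le> norm (t *\<^sub>R p - q)^2 / t"
    using assms by simp
  also have "\<dots> = t * norm p^2 - 2 * inner p q + norm q^2 / t"
    using assms unfolding power2_norm_eq_inner
    by (simp add: inner_simps inner_commute field_simps)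
  finally show ?thesis
    by simp
qed

lemma norm_add_power2_le:
  fixes p q :: "'a::real_inner"
  assumes "t > 0"
  shows "norm (p + q)^2 \<le> (1 + t) * norm p^2 + (1 + 1 / t) * norm q^2"
proof -
  have "norm (p + q)^2 = norm p^2 + 2 * inner p q + norm q^2"
    unfolding power2_norm_eq_inner by (simp add: inner_simps inner_commute)
  with inner_le_Young[OF assms, of p q] show ?thesis
    by (simp add: algebra_simps)
qed

lemma lipschitz_on_power2_normD:
  assumes "L-lipschitz_on X f" "x \<in> X" "y \<in> X"
  shows "norm (f x - f y)^2 \<le> L^2 * norm (x - y)^2"
proof -
  have "norm (f x - f y) \<le> L * norm (x - y)"
    using lipschitz_on_normD[OF assms] .
  then show ?thesis
    by (metis norm_ge_zero power_mono power_mult_distrib)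
qed

lemma step_distance_identity:
  fixes a b c v w xs :: "'a::real_inner" and \<beta> \<eta> :: real
  assumes c: "c = a - \<eta> *\<^sub>R w" and v: "\<beta> *\<^sub>R (a - b) = \<eta> *\<^sub>R v"
  shows "norm (c - xs)^2 = norm (a - xs)^2 - (1 - \<beta>) * norm (c - a)^2 - \<beta> * norm (b - a)^2
    - \<beta> * norm (c - b)^2 - 2 * \<eta> * inner w (b - xs) + 2 * inner (\<eta> *\<^sub>R (v - w)) (c - b)"
proof -
  have "inner (\<eta> *\<^sub>R (v - w)) (c - b) = \<beta> * inner (a - b) (c - b) - \<eta> * inner w (c - b)"
    using v by (metis inner_diff_left inner_scaleR_left scaleR_diff_right)
  then show ?thesis
    unfolding c power2_norm_eq_inner by (simp add: inner_simps inner_commute algebra_simps)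
qed

lemma step_distance_estimate:
  fixes a b c v xs :: "'a::real_inner" and F :: "'a \<Rightarrow> 'a"
  assumes c: "c = a - \<eta> *\<^sub>R F b" and v: "\<beta> *\<^sub>R (a - b) = \<eta> *\<^sub>R v"
    and weak_mvi: "inner (F b) (b - xs) \<ge> - \<rho> * norm (F b)^2"
    and "\<eta> > 0" "\<gamma> > 0"
  shows "norm (c - xs)^2 \<le> norm (a - xs)^2 - (1 - \<beta> - 2 * \<rho> / \<eta>) * norm (c - a)^2
    - \<beta> * norm (b - a)^2 - (\<beta> - \<gamma>) * norm (c - b)^2 + \<eta>^2 / \<gamma> * norm (v - F b)^2"
proof -
  have step_length: "norm (c - a)^2 = \<eta>^2 * norm (F b)^2"
    using \<open>\<eta> > 0\<close> by (simp add: c power_mult_distrib)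
  have "- 2 * \<eta> * inner (F b) (b - xs) \<le> 2 * \<eta> * (\<rho> * norm (F b)^2)"
    using mult_left_mono[OF weak_mvi, of \<eta>] \<open>\<eta> > 0\<close> by simp
  also have "\<dots> = 2 * \<rho> / \<eta> * norm (c - a)^2"
    unfolding step_length using \<open>\<eta> > 0\<close> by (simp add: power2_eq_square)
  finally have mvi_term: "- 2 * \<eta> * inner (F b) (b - xs) \<le> 2 * \<rho> / \<eta> * norm (c - a)^2" .
  have "2 * inner (\<eta> *\<^sub>R (v - F b)) (c - b) \<le> norm (\<eta> *\<^sub>R (v - F b))^2 / \<gamma> + \<gamma> * norm (c - b)^2"
    using inner_le_Young[of "1 / \<gamma>" "\<eta> *\<^sub>R (v - F b)" "c - b"] \<open>\<gamma> > 0\<close>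
    by (simp add: mult.commute)
  also have "\<dots> = \<eta>^2 / \<gamma> * norm (v - F b)^2 + \<gamma> * norm (c - b)^2"
    using \<open>\<eta> > 0\<close> by (simp add: power_mult_distrib)
  finally have error_term: "2 * inner (\<eta> *\<^sub>R (v - F b)) (c - b)
      \<le> \<eta>^2 / \<gamma> * norm (v - F b)^2 + \<gamma> * norm (c - b)^2" .
  show ?thesis
    using step_distance_identity[OF c v, of xs] mvi_term error_term by (simp add: algebra_simps)
qed

lemma operator_error_bound:
  fixes F :: "'a::real_inner \<Rightarrow> 'a"
  assumes Lip: "L-lipschitz_on UNIV F"
    and err: "norm (F a - v)^2 \<le> \<kappa>1 * norm (F a - F b')^2 + \<kappa>2 * norm (F a - F a')^2"
    and "\<kappa>1 \<ge> 0" "\<kappa>2 \<ge> 0" "r > 0"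
  shows "norm (v - F b)^2 \<le> (1 + r) * L^2 * norm (b - a)^2
    + (1 + 1 / r) * (\<kappa>1 * L^2 * norm (a - b')^2 + \<kappa>2 * L^2 * norm (a - a')^2)"
proof -
  have "norm (v - F b)^2 = norm ((F a - F b) - (F a - v))^2"
    by (simp add: algebra_simps)
  also have "\<dots> \<le> (1 + r) * norm (F a - F b)^2 + (1 + 1 / r) * norm (F a - v)^2"
    using norm_add_power2_le[OF \<open>r > 0\<close>, of "F a - F b" "v - F a"] by (simp add: norm_minus_commute)
  also have "\<dots> \<le> (1 + r) * (L^2 * norm (b - a)^2)
      + (1 + 1 / r) * (\<kappa>1 * (L^2 * norm (a - b')^2) + \<kappa>2 * (L^2 * norm (a - a')^2))"
  proof (intro add_mono mult_left_mono)
    show "norm (F a - F b)^2 \<le> L^2 * norm (b - a)^2"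
      using lipschitz_on_power2_normD[OF Lip] by (simp add: norm_minus_commute)
    show "norm (F a - v)^2 \<le> \<kappa>1 * (L^2 * norm (a - b')^2) + \<kappa>2 * (L^2 * norm (a - a')^2)"
      using err by (rule order_trans) (intro add_mono mult_left_mono lipschitz_on_power2_normD[OF Lip]
          UNIV_I \<open>\<kappa>1 \<ge> 0\<close> \<open>\<kappa>2 \<ge> 0\<close>)
  qed (use \<open>r > 0\<close> in auto)
  finally show ?thesis
    by (simp add: algebra_simps)
qed

lemma one_step_potential_descent:
  fixes F :: "'a::real_inner \<Rightarrow> 'a" and a a' b b' c v xs :: 'a
  assumes Lip: "L-lipschitz_on UNIV F"
    and weak_mvi: "inner (F b) (b - xs) \<ge> - \<rho> * norm (F b)^2"
    and b: "b = a - (\<eta> / \<beta>) *\<^sub>R v" and c: "c = a - \<eta> *\<^sub>R F b"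
    and err: "norm (F a - v)^2 \<le> \<kappa>1 * norm (F a - F b')^2 + \<kappa>2 * norm (F a - F a')^2"
    and "\<rho> \<ge> 0" "\<kappa>1 \<ge> 0" "\<kappa>2 \<ge> 0" "\<beta> > 0" "\<eta> > 0" "\<gamma> > 0" "r > 0" "s > 0" "\<mu> \<ge> 0"
  shows "norm (c - xs)^2
      + \<kappa>1 * (1 + r) * L^2 * \<eta>^2 / (r * \<gamma>) * norm (c - b)^2
      + \<kappa>2 * (1 + r) * L^2 * \<eta>^2 / (r * \<gamma>) * norm (c - a)^2
    \<le> norm (a - xs)^2
      + \<kappa>1 * (1 + r) * L^2 * \<eta>^2 / (r * \<gamma>) * norm (a - b')^2
      + \<kappa>2 * (1 + r) * L^2 * \<eta>^2 / (r * \<gamma>) * norm (a - a')^2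
      - (\<beta> - (1 + r) * L^2 * \<eta>^2 / \<gamma> - 2 * \<mu> * \<rho> * (1 + s) / (s * \<eta>)) * norm (b - a)^2
      - (\<beta> - \<gamma> - \<kappa>1 * (1 + r) * L^2 * \<eta>^2 / (r * \<gamma>) - 2 * \<mu> * \<rho> * (1 + s) / \<eta>) * norm (c - b)^2
      - (1 - \<beta> - \<kappa>2 * (1 + r) * L^2 * \<eta>^2 / (r * \<gamma>) - 2 * (1 - \<mu>) * \<rho> / \<eta>) * norm (c - a)^2"
proof -
  have v: "\<beta> *\<^sub>R (a - b) = \<eta> *\<^sub>R v"
    using \<open>\<beta> > 0\<close> by (simp add: b)
  have "\<eta>^2 / \<gamma> * norm (v - F b)^2 \<le> \<eta>^2 / \<gamma> * ((1 + r) * L^2 * norm (b - a)^2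
      + (1 + 1 / r) * (\<kappa>1 * L^2 * norm (a - b')^2 + \<kappa>2 * L^2 * norm (a - a')^2))"
    using operator_error_bound[OF Lip err \<open>\<kappa>1 \<ge> 0\<close> \<open>\<kappa>2 \<ge> 0\<close> \<open>r > 0\<close>]
    by (rule mult_left_mono) (use \<open>\<gamma> > 0\<close> in simp)
  also have "\<dots> = (1 + r) * L^2 * \<eta>^2 / \<gamma> * norm (b - a)^2
      + \<kappa>1 * (1 + r) * L^2 * \<eta>^2 / (r * \<gamma>) * norm (a - b')^2
      + \<kappa>2 * (1 + r) * L^2 * \<eta>^2 / (r * \<gamma>) * norm (a - a')^2"
    using \<open>r > 0\<close> \<open>\<gamma> > 0\<close> by (simp add: field_simps)
  finally have scaled_error: "\<eta>^2 / \<gamma> * norm (v - F b)^2 \<le> \<dots>" .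
  have "2 * \<mu> * \<rho> / \<eta> * norm (c - a)^2
      \<le> 2 * \<mu> * \<rho> / \<eta> * ((1 + s) * norm (c - b)^2 + (1 + 1 / s) * norm (b - a)^2)"
    using norm_add_power2_le[OF \<open>s > 0\<close>, of "c - b" "b - a"] \<open>\<rho> \<ge> 0\<close> \<open>\<eta> > 0\<close> \<open>\<mu> \<ge> 0\<close>
    by (intro mult_left_mono) auto
  also have "\<dots> = 2 * \<mu> * \<rho> * (1 + s) / \<eta> * norm (c - b)^2
      + 2 * \<mu> * \<rho> * (1 + s) / (s * \<eta>) * norm (b - a)^2"
    using \<open>s > 0\<close> \<open>\<eta> > 0\<close> by (simp add: field_simps)
  finally have scaled_split: "2 * \<mu> * \<rho> / \<eta> * norm (c - a)^2 \<le> \<dots>" .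
  have mu_split: "2 * \<rho> / \<eta> * norm (c - a)^2
      = 2 * \<mu> * \<rho> / \<eta> * norm (c - a)^2 + 2 * (1 - \<mu>) * \<rho> / \<eta> * norm (c - a)^2"
    by (simp add: algebra_simps add_divide_distrib[symmetric])
  show ?thesis
    using step_distance_estimate[where F = F, OF c v weak_mvi \<open>\<eta> > 0\<close> \<open>\<gamma> > 0\<close>]
      scaled_error scaled_split mu_split
    unfolding left_diff_distrib by linarith
qed

theorem lemma2:
  fixes F :: "real ^ 'p \<Rightarrow> real ^ 'p"
    and x y u :: "int \<Rightarrow> real ^ 'p"
    and xs :: "real ^ 'p"
    and L \<rho> \<kappa>1 \<kappa>2 \<beta> \<eta> \<gamma> r s \<mu> :: real
    and k :: int
  assumes zer_ne: "zer F \<noteq> {}"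
    and Lip: "L-lipschitz_on UNIV F"
    and xs_zer: "xs \<in> zer F"
    and rho: "\<rho> \<ge> 0"
    and weak_mvi: "\<And>z. inner (F z) (z - xs) \<ge> - \<rho> * norm (F z)^2"
    and k1: "\<kappa>1 \<ge> 0" and k2: "\<kappa>2 \<ge> 0"
    and beta: "0 < \<beta>" "\<beta> \<le> 1"
    and eta: "\<eta> > 0"
    and init_x: "x (-1) = x 0" and init_y: "y (-1) = x 0"
    and y_def: "\<And>j. j \<ge> 0 \<Longrightarrow> y j = x j - (\<eta> / \<beta>) *\<^sub>R u j"
    and x_def: "\<And>j. j \<ge> 0 \<Longrightarrow> x (j + 1) = x j - \<eta> *\<^sub>R F (y j)"
    and u_err: "\<And>j. j \<ge> 0 \<Longrightarrow> norm (F (x j) - u j)^2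
                  \<le> \<kappa>1 * norm (F (x j) - F (y (j - 1)))^2 + \<kappa>2 * norm (F (x j) - F (x (j - 1)))^2"
    and gamma: "\<gamma> > 0" and r: "r > 0"
    and s: "s > 0" and mu: "0 \<le> \<mu>" "\<mu> \<le> 1"
    and k: "k \<ge> 0"
  shows "Pot \<kappa>1 \<kappa>2 L \<eta> r \<gamma> xs x y (k + 1)
    \<le> Pot \<kappa>1 \<kappa>2 L \<eta> r \<gamma> xs x y k
       - (\<beta> - (1 + r) * L^2 * \<eta>^2 / \<gamma> - 2 * \<mu> * \<rho> * (1 + s) / (s * \<eta>)) * norm (y k - x k)^2
       - (\<beta> - \<gamma> - \<kappa>1 * (1 + r) * L^2 * \<eta>^2 / (r * \<gamma>) - 2 * \<mu> * \<rho> * (1 + s) / \<eta>) * norm (x (k + 1) - y k)^2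
       - (1 - \<beta> - \<kappa>2 * (1 + r) * L^2 * \<eta>^2 / (r * \<gamma>) - 2 * (1 - \<mu>) * \<rho> / \<eta>) * norm (x (k + 1) - x k)^2"
proof -
  \<comment> \<open>Only step k enters; F xs = 0, \<beta> \<le> 1, \<mu> \<le> 1 and the values at index -1 are not needed.\<close>
  have "y k = x k - (\<eta> / \<beta>) *\<^sub>R u k" "x (k + 1) = x k - \<eta> *\<^sub>R F (y k)"
    using y_def x_def k by auto
  from one_step_potential_descent[OF Lip weak_mvi this u_err[OF k] rho k1 k2 beta(1) eta gamma r s mu(1)]
  show ?thesis
    unfolding Pot_def by simp
qed

end
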